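(* Let $W$ be an eventually periodic subset of $\mathbb{Z}^d$ with periods $u_1,\dots,u_d$, and let $\mathscr{W}_1,\mathcal{W}$ be as defined in the context. Suppose $\mathscr{W}_1$ is nonempty and $\pi(\mathcal{W}\cup\mathscr{W}_1)=\mathbb{Z}^d/\mathcal{L}$. Then $W$ has a minimal complement in $\mathbb{Z}^d$.
   Context: $d\geqslant1$, $\mathbb{N}=\{0,1,2,\dots\}$. Let $u_1,\dots,u_d\in\mathbb{Z}^d$ satisfy no nontrivial $\mathbb{Z}$-linear relation, $\mathcal{L}=\mathbb{Z}u_1+\dots+\mathbb{Z}u_d$, $P=\mathbb{N}u_1+\dots+\mathbb{N}u_d$, $\pi:\mathbb{Z}^d\to\mathbb{Z}^d/\mathcal{L}$ the quotient map. A nonempty $X\subseteq\mathbb{Z}^d$ is eventually periodic with periods $u_1,\dots,u_d$ if $X\subseteq F+P$ for some nonempty finite $F\subseteq\mathbb{Z}^d$ and $x+P\subseteq X$ for all but finitely many $x\in X$. For such $W$: $\mathscr{W}=\{w\in W:w+P\not\subseteq W\}$; $\mathcal{W}=\{w\in W\setminus\mathscr{W}:(w-P)\cap(W\setminus\mathscr{W})=\{w\}\}$; $\mathscr{W}_1$ is the set of elements of $\mathscr{W}$ congruent modulo $\mathcal{L}$ to no element of $\mathcal{W}$. A nonempty $M\subseteq\mathbb{Z}^d$ is a complement of $W$ if $M+W=\mathbb{Z}^d$, and a minimal complement if no proper subset of $M$ is a complement of $W$. *)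

theory Defs
  imports "HOL-Analysis.Analysis"
begin

text \<open>Z^d is modelled as int ^ 'n, with d = CARD('n). The periods u_1..u_d are a family
  u :: 'n => int ^ 'n.\<close>

definition Zindep :: "('n::finite \<Rightarrow> int ^ 'n) \<Rightarrow> bool" where
  "Zindep u \<longleftrightarrow> (\<forall>c :: 'n \<Rightarrow> int. (\<Sum>i\<in>UNIV. c i *s u i) = 0 \<longrightarrow> (\<forall>i. c i = 0))"

definition lat :: "('n::finite \<Rightarrow> int ^ 'n) \<Rightarrow> (int ^ 'n) set" where
  "lat u = {\<Sum>i\<in>UNIV. c i *s u i | c :: 'n \<Rightarrow> int. True}"

definition cone :: "('n::finite \<Rightarrow> int ^ 'n) \<Rightarrow> (int ^ 'n) set" where
  "cone u = {\<Sum>i\<in>UNIV. int (c i) *s u i | c :: 'n \<Rightarrow> nat. True}"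

definition eventually_periodic :: "('n::finite \<Rightarrow> int ^ 'n) \<Rightarrow> (int ^ 'n) set \<Rightarrow> bool" where
  "eventually_periodic u X \<longleftrightarrow> X \<noteq> {} \<and>
     (\<exists>F. finite F \<and> F \<noteq> {} \<and> X \<subseteq> {f + p | f p. f \<in> F \<and> p \<in> cone u}) \<and>
     finite {x \<in> X. \<not> ((\<lambda>p. x + p) ` cone u \<subseteq> X)}"

definition scrW :: "('n::finite \<Rightarrow> int ^ 'n) \<Rightarrow> (int ^ 'n) set \<Rightarrow> (int ^ 'n) set" where
  "scrW u W = {w \<in> W. \<not> ((\<lambda>p. w + p) ` cone u \<subseteq> W)}"

definition calW :: "('n::finite \<Rightarrow> int ^ 'n) \<Rightarrow> (int ^ 'n) set \<Rightarrow> (int ^ 'n) set" where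
  "calW u W = {w \<in> W - scrW u W. (\<lambda>p. w - p) ` cone u \<inter> (W - scrW u W) = {w}}"

definition scrW1 :: "('n::finite \<Rightarrow> int ^ 'n) \<Rightarrow> (int ^ 'n) set \<Rightarrow> (int ^ 'n) set" where
  "scrW1 u W = {w \<in> scrW u W. \<not> (\<exists>v \<in> calW u W. w - v \<in> lat u)}"

text \<open>pi(S) = Z^d / L : every point is congruent mod L to some element of S.\<close>
definition covers_quotient :: "('n::finite \<Rightarrow> int ^ 'n) \<Rightarrow> (int ^ 'n) set \<Rightarrow> bool" where
  "covers_quotient u S \<longleftrightarrow> (\<forall>x. \<exists>s \<in> S. x - s \<in> lat u)"

definition is_complement :: "(int ^ 'n::finite) set \<Rightarrow> (int ^ 'n) set \<Rightarrow> bool" where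
  "is_complement M W \<longleftrightarrow> M \<noteq> {} \<and> {m + w | m w. m \<in> M \<and> w \<in> W} = UNIV"

definition is_minimal_complement :: "(int ^ 'n::finite) set \<Rightarrow> (int ^ 'n) set \<Rightarrow> bool" where
  "is_minimal_complement M W \<longleftrightarrow> is_complement M W \<and> (\<forall>M'. M' \<subset> M \<longrightarrow> \<not> is_complement M' W)"

end

theory Submission
  imports Defs
begin

(* Let G be the set of points whose class modulo L misses W - scrW u W.  Because the u i are
  Z-independent and W lies in F + P with F finite, every point of W - scrW u W lies above a
  cone-minimal one, which belongs to calW u W; hence scrW1 u W lies in G, and G is nonempty.
  Choose n so large that distinct points of the finite set scrW u W stay distinct modulo nL.
  Since W meets every class modulo L, the fundamental box T of nL in L satisfies T + nL + W = Z^d;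
  choose B inside T inclusion-minimal with G contained in B + nL + W.  Then M = B + nL is a
  complement: points outside G are absorbed by the periodic part of W, as L lies in P + nL.
  It is minimal: if b + k is removed from M, a point of G reachable only through b produces two
  points of scrW u W congruent modulo nL, which therefore coincide, so b + k was needed. *)

lemma setcompr_plus_eq_set_plus: "{a + b | a b. a \<in> A \<and> b \<in> B} = A + B"
  by (auto simp: set_plus_def)

definition lin_comb :: "('n::finite \<Rightarrow> int ^ 'n) \<Rightarrow> ('n \<Rightarrow> int) \<Rightarrow> int ^ 'n" where
  "lin_comb u c = (\<Sum>i\<in>UNIV. c i *s u i)"

definition nat_comb :: "('n::finite \<Rightarrow> int ^ 'n) \<Rightarrow> ('n \<Rightarrow> nat) \<Rightarrow> int ^ 'n" where
  "nat_comb u d = lin_comb u (\<lambda>i. int (d i))"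

lemma lin_comb_add: "lin_comb u (\<lambda>i. a i + b i) = lin_comb u a + lin_comb u b"
  by (simp add: lin_comb_def vector_sadd_rdistrib sum.distrib)

lemma lin_comb_diff: "lin_comb u (\<lambda>i. a i - b i) = lin_comb u a - lin_comb u b"
  by (simp add: lin_comb_def vec_eq_iff algebra_simps sum_subtractf)

lemma lin_comb_zero [simp]: "lin_comb u (\<lambda>_. 0) = 0"
  by (simp add: lin_comb_def)

lemma lin_comb_scale: "lin_comb u (\<lambda>i. c * a i) = c *s lin_comb u a"
  by (simp add: lin_comb_def vec_eq_iff sum_distrib_left mult.assoc)

lemma lin_comb_inj:
  assumes "Zindep u"
  shows "inj (lin_comb u)"
proof (rule injI)
  fix a b assume "lin_comb u a = lin_comb u b"
  then have "(\<Sum>i\<in>UNIV. (a i - b i) *s u i) = 0"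
    using lin_comb_diff[of u a b] by (simp add: lin_comb_def)
  then have "a i - b i = 0" for i
    using assms[unfolded Zindep_def, rule_format, of "\<lambda>i. a i - b i"] by blast
  then show "a = b" by auto
qed

lemma nat_comb_add: "nat_comb u (\<lambda>i. a i + b i) = nat_comb u a + nat_comb u b"
  by (simp add: nat_comb_def lin_comb_add)

lemma nat_comb_zero [simp]: "nat_comb u (\<lambda>_. 0) = 0"
  by (simp add: nat_comb_def)

lemma nat_comb_inj:
  assumes "Zindep u"
  shows "inj (nat_comb u)"
proof (rule injI)
  fix a b assume "nat_comb u a = nat_comb u b"
  then have "(\<lambda>i. int (a i)) = (\<lambda>i. int (b i))"
    using injD[OF lin_comb_inj[OF assms]] by (simp add: nat_comb_def)
  then show "a = b" by (simp add: fun_eq_iff)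
qed

lemma lat_eq_range: "lat u = range (lin_comb u)"
  by (auto simp: lat_def lin_comb_def)

lemma cone_eq_range: "cone u = range (nat_comb u)"
  by (auto simp: cone_def nat_comb_def lin_comb_def)

lemma zero_in_lat: "0 \<in> lat u"
  unfolding lat_eq_range by (rule range_eqI[of _ _ "\<lambda>_. 0"]) simp

lemma lat_add: "x \<in> lat u \<Longrightarrow> y \<in> lat u \<Longrightarrow> x + y \<in> lat u"
  unfolding lat_eq_range by (auto simp flip: lin_comb_add)

lemma lat_diff: "x \<in> lat u \<Longrightarrow> y \<in> lat u \<Longrightarrow> x - y \<in> lat u"
  unfolding lat_eq_range by (auto simp flip: lin_comb_diff)

lemma cone_subset_lat: "cone u \<subseteq> lat u"
  unfolding cone_eq_range lat_eq_range nat_comb_def by blast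

lemma zero_in_cone: "0 \<in> cone u"
  unfolding cone_eq_range by (rule range_eqI[of _ _ "\<lambda>_. 0"]) simp

lemma cone_depth_bounded:
  assumes "Zindep u" "finite F"
  shows "\<exists>b. \<forall>d. w - nat_comb u d \<in> F + cone u \<longrightarrow> sum d UNIV < b"
proof -
  define e where "e f = inv (nat_comb u) (w - f)" for f
  have "sum d UNIV \<le> (\<Sum>f\<in>F. sum (e f) UNIV)" if d: "w - nat_comb u d \<in> F + cone u" for d
  proof -
    obtain f c where f: "f \<in> F" and "w - nat_comb u d = f + nat_comb u c"
      using d unfolding cone_eq_range by (auto elim!: set_plus_elim)
    then have "w - f = nat_comb u (\<lambda>i. d i + c i)"
      by (simp add: nat_comb_add algebra_simps)
    then have "e f = (\<lambda>i. d i + c i)"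
      unfolding e_def by (simp add: inv_f_f[OF nat_comb_inj[OF assms(1)]])
    then have "sum d UNIV \<le> sum (e f) UNIV"
      by (simp add: sum_mono)
    also have "\<dots> \<le> (\<Sum>f\<in>F. sum (e f) UNIV)"
      using f assms(2) by (intro member_le_sum) auto
    finally show ?thesis .
  qed
  then show ?thesis
    by (intro exI[of _ "Suc (\<Sum>f\<in>F. sum (e f) UNIV)"]) (auto simp: less_Suc_eq_le)
qed

lemma ex_cone_minimal_below:
  assumes "Zindep u" "finite F" "S \<subseteq> F + cone u" "w \<in> S"
  shows "\<exists>v\<in>S. w - v \<in> cone u \<and> (\<lambda>p. v - p) ` cone u \<inter> S = {v}"
proof -
  obtain b where b: "\<forall>d. w - nat_comb u d \<in> S \<longrightarrow> sum d UNIV < b"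
    using cone_depth_bounded[OF assms(1,2), of w] assms(3) by blast
  have "w - nat_comb u (\<lambda>_. 0) \<in> S"
    using assms(4) by simp
  then obtain d0 where d0: "w - nat_comb u d0 \<in> S"
    and deepest: "\<And>d. w - nat_comb u d \<in> S \<Longrightarrow> sum d UNIV \<le> sum d0 UNIV"
    using ex_has_greatest_nat[of "\<lambda>d. w - nat_comb u d \<in> S" _ "\<lambda>d. sum d UNIV" b] b by blast
  define v where "v = w - nat_comb u d0"
  have "d = (\<lambda>_. 0)" if "v - nat_comb u d \<in> S" for d
  proof -
    have "w - nat_comb u (\<lambda>i. d0 i + d i) \<in> S"
      using that by (simp add: v_def nat_comb_add algebra_simps)
    then have "sum (\<lambda>i. d0 i + d i) UNIV \<le> sum d0 UNIV"
      by (rule deepest)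
    then show ?thesis
      by (simp add: sum.distrib fun_eq_iff)
  qed
  then have "(\<lambda>p. v - p) ` cone u \<inter> S = {v}"
    using d0 zero_in_cone[of u] by (force simp: v_def cone_eq_range)
  moreover have "w - v \<in> cone u"
    by (simp add: v_def cone_eq_range)
  ultimately show ?thesis
    using d0 v_def by blast
qed

lemma ex_calW_below:
  assumes "Zindep u" "eventually_periodic u W" "w \<in> W - scrW u W"
  shows "\<exists>v\<in>calW u W. w - v \<in> cone u"
proof -
  obtain F where "finite F" "W \<subseteq> F + cone u"
    using assms(2) by (auto simp: eventually_periodic_def setcompr_plus_eq_set_plus)
  then have "W - scrW u W \<subseteq> F + cone u"
    by blast
  from ex_cone_minimal_below[OF assms(1) \<open>finite F\<close> this assms(3)] show ?thesis
    by (auto simp: calW_def)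
qed

definition outside_periodic_classes :: "('n::finite \<Rightarrow> int ^ 'n) \<Rightarrow> (int ^ 'n) set \<Rightarrow> (int ^ 'n) set" where
  "outside_periodic_classes u W = {x. \<forall>w\<in>W - scrW u W. x - w \<notin> lat u}"

lemma outside_periodic_classes_lat_shift:
  assumes "x \<in> outside_periodic_classes u W" "x - y \<in> lat u"
  shows "y \<in> outside_periodic_classes u W"
proof -
  have "x - w = (x - y) + (y - w)" for w
    by simp
  then show ?thesis
    using assms lat_add by (fastforce simp: outside_periodic_classes_def)
qed

lemma W_inter_outside_periodic_classes: "W \<inter> outside_periodic_classes u W \<subseteq> scrW u W"
  by (force simp: outside_periodic_classes_def zero_in_lat)

lemma scrW1_subset_outside_periodic_classes:
  assumes "Zindep u" "eventually_periodic u W"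
  shows "scrW1 u W \<subseteq> outside_periodic_classes u W"
proof
  fix s assume s: "s \<in> scrW1 u W"
  have False if w: "w \<in> W - scrW u W" "s - w \<in> lat u" for w
  proof -
    obtain v where "v \<in> calW u W" "w - v \<in> lat u"
      using ex_calW_below[OF assms w(1)] cone_subset_lat by blast
    moreover have "s - v = (s - w) + (w - v)"
      by simp
    ultimately show False
      using s w(2) lat_add by (fastforce simp: scrW1_def)
  qed
  then show "s \<in> outside_periodic_classes u W"
    by (auto simp: outside_periodic_classes_def)
qed

definition fundamental_box :: "('n::finite \<Rightarrow> int ^ 'n) \<Rightarrow> nat \<Rightarrow> (int ^ 'n) set" where
  "fundamental_box u n = nat_comb u ` {d. \<forall>i. d i < n}"

lemma finite_fundamental_box:
  fixes u :: "'n::finite \<Rightarrow> int ^ 'n"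
  shows "finite (fundamental_box u n)"
proof -
  have "{d::'n \<Rightarrow> nat. \<forall>i. d i < n} = Pi\<^sub>E UNIV (\<lambda>_. {..<n})"
    by (auto simp: PiE_UNIV_domain)
  moreover have "finite (Pi\<^sub>E UNIV (\<lambda>_::'n. {..<n}))"
    by (intro finite_PiE) auto
  ultimately show ?thesis
    unfolding fundamental_box_def by simp
qed

lemma fundamental_box_subset_cone: "fundamental_box u n \<subseteq> cone u"
  by (auto simp: fundamental_box_def cone_eq_range)

lemma scaled_lat_subset_lat: "(*s) c ` lat u \<subseteq> lat u"
  by (auto simp: lat_eq_range simp flip: lin_comb_scale)

lemma zero_in_scaled_lat: "0 \<in> (*s) c ` lat u"
  using zero_in_lat by force

lemma scaled_lat_add:
  "x \<in> (*s) c ` lat u \<Longrightarrow> y \<in> (*s) c ` lat u \<Longrightarrow> x + y \<in> (*s) c ` lat u"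
  by (auto simp flip: vector_add_ldistrib intro: lat_add)

lemma scaled_lat_diff:
  "x \<in> (*s) c ` lat u \<Longrightarrow> y \<in> (*s) c ` lat u \<Longrightarrow> x - y \<in> (*s) c ` lat u"
  by (auto simp flip: vector_ssub_ldistrib intro: lat_diff)

lemma lat_subset_box_plus_scaled_lat:
  assumes "n > 0"
  shows "lat u \<subseteq> fundamental_box u n + (*s) (int n) ` lat u"
proof
  fix y assume "y \<in> lat u"
  then obtain c where c: "y = lin_comb u c"
    by (auto simp: lat_eq_range)
  define r where "r i = nat (c i mod int n)" for i
  have "c = (\<lambda>i. int (r i) + int n * (c i div int n))"
    using assms by (simp add: r_def fun_eq_iff)
  then have "y = nat_comb u r + int n *s lin_comb u (\<lambda>i. c i div int n)"
    unfolding c nat_comb_def by (metis lin_comb_add lin_comb_scale)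
  moreover have "nat_comb u r \<in> fundamental_box u n"
    using assms by (auto simp: fundamental_box_def r_def nat_less_iff)
  ultimately show "y \<in> fundamental_box u n + (*s) (int n) ` lat u"
    by (auto simp: lat_eq_range)
qed

lemma finite_separated_mod_scaling:
  fixes S :: "(int ^ 'n::finite) set"
  assumes "finite S"
  shows "\<exists>n>0. \<forall>x\<in>S. \<forall>y\<in>S. x - y \<in> range ((*s) (int n)) \<longrightarrow> x = y"
proof -
  define D where "D = (\<lambda>(x, y, j). \<bar>x $ j - y $ j\<bar>) ` (S \<times> S \<times> UNIV)"
  define n where "n = Suc (nat (Max (insert 0 D)))"
  have "finite D"
    using assms by (simp add: D_def)
  have bound: "\<bar>x $ j - y $ j\<bar> < int n" if "x \<in> S" "y \<in> S" for x y j
  proof -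
    have "\<bar>x $ j - y $ j\<bar> \<in> D"
      using that unfolding D_def by force
    then have "\<bar>x $ j - y $ j\<bar> \<le> Max (insert 0 D)"
      using \<open>finite D\<close> by simp
    moreover have "0 \<le> Max (insert 0 D)"
      using \<open>finite D\<close> by simp
    ultimately show ?thesis
      by (simp add: n_def)
  qed
  have "x = y" if "x \<in> S" "y \<in> S" "x - y = int n *s z" for x y z
  proof -
    have "z $ j = 0" for j
    proof -
      have "int n * \<bar>z $ j\<bar> < int n"
        using bound[OF that(1,2), of j] arg_cong[OF that(3), of "\<lambda>v. v $ j"]
        by (simp add: abs_mult)
      then show ?thesis
        by (simp add: mult_less_cancel_left2)
    qed
    then show ?thesis
      using that(3) by (simp add: vec_eq_iff)
  qed
  then show ?thesis
    by (intro exI[of _ n]) (auto simp: n_def)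
qed

lemma finite_subset_irredundant:
  assumes "finite T" "P T"
  shows "\<exists>B\<subseteq>T. P B \<and> (\<forall>b\<in>B. \<not> P (B - {b}))"
proof -
  obtain B where B: "B \<subseteq> T \<and> P B" and least: "\<And>B'. B' \<subseteq> T \<and> P B' \<Longrightarrow> card B \<le> card B'"
    using ex_has_least_nat[of "\<lambda>B. B \<subseteq> T \<and> P B" T card] assms(2) by blast
  have "finite B"
    using B assms(1) finite_subset by blast
  have "\<not> P (B - {b})" if "b \<in> B" for b
  proof -
    have "card (B - {b}) < card B"
      using \<open>finite B\<close> that by (rule card_Diff1_less)
    then show ?thesis
      using least[of "B - {b}"] B by auto
  qed
  with B show ?thesis
    by blast
qed

lemma is_complement_iff: "is_complement M W \<longleftrightarrow> M \<noteq> {} \<and> M + W = UNIV"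
  by (simp add: is_complement_def setcompr_plus_eq_set_plus)

lemma is_complement_of_outside_cover:
  fixes B K :: "(int ^ 'n::finite) set"
  assumes "B \<noteq> {}" "B \<subseteq> lat u" "0 \<in> K" "lat u \<subseteq> cone u + K"
    and cover: "outside_periodic_classes u W \<subseteq> B + K + W"
  shows "is_complement (B + K) W"
proof -
  have "x \<in> B + K + W" for x
  proof (cases "x \<in> outside_periodic_classes u W")
    case True
    with cover show ?thesis
      by blast
  next
    case False
    then obtain w where w: "w \<in> W - scrW u W" "x - w \<in> lat u"
      by (auto simp: outside_periodic_classes_def)
    obtain b where "b \<in> B"
      using assms(1) by blast
    then have "x - w - b \<in> cone u + K"
      using assms(2,4) lat_diff w(2) by blast
    then obtain p k where "p \<in> cone u" "k \<in> K" "x - w - b = p + k"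
      by (auto elim: set_plus_elim)
    moreover from this(1) have "w + p \<in> W"
      using w(1) by (auto simp: scrW_def)
    moreover have "x = (b + k) + (w + p)"
      using \<open>x - w - b = p + k\<close> by (simp add: algebra_simps)
    ultimately show ?thesis
      using \<open>b \<in> B\<close> by (auto intro: set_plus_intro)
  qed
  then show ?thesis
    using assms(1,3) by (auto simp: is_complement_iff add.assoc)
qed

lemma is_complement_mono: "is_complement M W \<Longrightarrow> M \<subseteq> M' \<Longrightarrow> is_complement M' W"
  unfolding is_complement_def by blast

lemma is_minimal_complementI:
  assumes "is_complement M W" "\<And>m. m \<in> M \<Longrightarrow> \<not> is_complement (M - {m}) W"
  shows "is_minimal_complement M W"
proof -
  have "\<not> is_complement M' W" if M': "M' \<subset> M" for M'
  proof
    assume "is_complement M' W"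
    obtain m where "m \<in> M" "M' \<subseteq> M - {m}"
      using M' by blast
    with \<open>is_complement M' W\<close> assms(2) show False
      using is_complement_mono by blast
  qed
  with assms(1) show ?thesis
    by (simp add: is_minimal_complement_def)
qed

lemma W_eq_in_outside_class:
  assumes "K \<subseteq> lat u"
    and separated: "\<And>w w'. w \<in> scrW u W \<Longrightarrow> w' \<in> scrW u W \<Longrightarrow> w - w' \<in> K \<Longrightarrow> w = w'"
    and "w \<in> W" "w' \<in> W" "w \<in> outside_periodic_classes u W" "w - w' \<in> K"
  shows "w = w'"
proof -
  have "w' \<in> outside_periodic_classes u W"
    using assms(1,5,6) outside_periodic_classes_lat_shift by blast
  then show ?thesis
    using assms(3-6) separated W_inter_outside_periodic_classes by blast
qed

lemma not_complement_remove_of_irredundant_cover: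
  fixes B K :: "(int ^ 'n::finite) set"
  assumes K_add: "\<And>k k'. k \<in> K \<Longrightarrow> k' \<in> K \<Longrightarrow> k + k' \<in> K"
    and K_diff: "\<And>k k'. k \<in> K \<Longrightarrow> k' \<in> K \<Longrightarrow> k - k' \<in> K"
    and "K \<subseteq> lat u" "B \<subseteq> lat u"
    and separated: "\<And>w w'. w \<in> scrW u W \<Longrightarrow> w' \<in> scrW u W \<Longrightarrow> w - w' \<in> K \<Longrightarrow> w = w'"
    and cover: "outside_periodic_classes u W \<subseteq> B + K + W"
    and irredundant: "\<not> outside_periodic_classes u W \<subseteq> (B - {b}) + K + W"
    and "b \<in> B" "k \<in> K"
  shows "\<not> is_complement (B + K - {b + k}) W"
proof
  let ?G = "outside_periodic_classes u W"
  assume "is_complement (B + K - {b + k}) W"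
  obtain x where x: "x \<in> ?G" "x \<notin> (B - {b}) + K + W"
    using irredundant by blast
  then obtain b0 k0 w0 where x_eq: "b0 \<in> B" "k0 \<in> K" "w0 \<in> W" "x = b0 + k0 + w0"
    using cover by (blast elim: set_plus_elim)
  have "b0 = b"
    using x(2) x_eq by (auto intro: set_plus_intro)
  have "b + k + w0 \<in> (B + K - {b + k}) + W"
    using \<open>is_complement (B + K - {b + k}) W\<close> by (simp add: is_complement_iff)
  then obtain b' k' w' where b': "b' \<in> B" "k' \<in> K" "b' + k' \<noteq> b + k" "w' \<in> W"
    and "b + k + w0 = b' + k' + w'"
    by (auto elim!: set_plus_elim)
  have "b' = b"
  proof (rule ccontr)
    assume "b' \<noteq> b"
    have "x = b' + (k' - k + k0) + w'"
      using x_eq(4) \<open>b + k + w0 = b' + k' + w'\<close> \<open>b0 = b\<close> by (simp add: algebra_simps)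
    then show False
      using x(2) b'(1,2,4) \<open>b' \<noteq> b\<close> K_add K_diff \<open>k \<in> K\<close> x_eq(2) by (blast intro: set_plus_intro)
  qed
  have "x - w0 = b + k0"
    using x_eq(4) \<open>b0 = b\<close> by simp
  moreover have "b + k0 \<in> lat u"
    using \<open>b \<in> B\<close> x_eq(2) assms(3,4) lat_add by blast
  ultimately have "w0 \<in> ?G"
    using outside_periodic_classes_lat_shift[OF x(1)] by simp
  have "w0 - w' = k' - k"
    using \<open>b + k + w0 = b' + k' + w'\<close> \<open>b' = b\<close> by (simp add: algebra_simps)
  then have "w0 = w'"
    using W_eq_in_outside_class[OF assms(3) separated x_eq(3) b'(4) \<open>w0 \<in> ?G\<close>] K_diff b'(2) \<open>k \<in> K\<close>
    by simp
  then show False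
    using \<open>w0 - w' = k' - k\<close> b'(3) \<open>b' = b\<close> by simp
qed

lemma is_minimal_complement_of_irredundant_cover:
  fixes B K :: "(int ^ 'n::finite) set"
  assumes K_add: "\<And>k k'. k \<in> K \<Longrightarrow> k' \<in> K \<Longrightarrow> k + k' \<in> K"
    and K_diff: "\<And>k k'. k \<in> K \<Longrightarrow> k' \<in> K \<Longrightarrow> k - k' \<in> K"
    and "K \<subseteq> lat u" "B \<subseteq> lat u"
    and separated: "\<And>w w'. w \<in> scrW u W \<Longrightarrow> w' \<in> scrW u W \<Longrightarrow> w - w' \<in> K \<Longrightarrow> w = w'"
    and cover: "outside_periodic_classes u W \<subseteq> B + K + W"
    and irredundant: "\<And>b. b \<in> B \<Longrightarrow> \<not> outside_periodic_classes u W \<subseteq> (B - {b}) + K + W"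
    and complement: "is_complement (B + K) W"
  shows "is_minimal_complement (B + K) W"
proof (rule is_minimal_complementI[OF complement])
  fix m assume "m \<in> B + K"
  then obtain b k where "b \<in> B" "k \<in> K" "m = b + k"
    by (auto elim: set_plus_elim)
  then show "\<not> is_complement (B + K - {m}) W"
    using not_complement_remove_of_irredundant_cover[OF K_add K_diff assms(3,4) separated cover
        irredundant] by blast
qed

lemma lat_subset_cone_plus_scaled_lat:
  assumes "n > 0"
  shows "lat u \<subseteq> cone u + (*s) (int n) ` lat u"
  using lat_subset_box_plus_scaled_lat[OF assms] set_plus_mono2[OF fundamental_box_subset_cone order_refl]
  by (rule order_trans)

lemma box_plus_scaled_lat_plus_eq_UNIV:
  assumes "n > 0" "\<forall>x. \<exists>s\<in>W. x - s \<in> lat u"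
  shows "fundamental_box u n + (*s) (int n) ` lat u + W = UNIV"
proof -
  have "x \<in> fundamental_box u n + (*s) (int n) ` lat u + W" for x
  proof -
    obtain s where "s \<in> W" "x - s \<in> fundamental_box u n + (*s) (int n) ` lat u"
      using assms lat_subset_box_plus_scaled_lat by blast
    from this(2) obtain t k where "t \<in> fundamental_box u n" "k \<in> (*s) (int n) ` lat u" "x - s = t + k"
      by (rule set_plus_elim) blast
    moreover from this(1,2) have "t + k + s \<in> fundamental_box u n + (*s) (int n) ` lat u + W"
      using \<open>s \<in> W\<close> by (intro set_plus_intro)
    ultimately show ?thesis
      by (simp add: algebra_simps)
  qed
  then show ?thesis
    by blast
qed

lemma ex_minimal_complement_plus_scaled_lat:
  assumes "n > 0"
    and separated: "\<And>w w'. w \<in> scrW u W \<Longrightarrow> w' \<in> scrW u W \<Longrightarrow> w - w' \<in> (*s) (int n) ` lat u \<Longrightarrow> w = w'"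
    and "outside_periodic_classes u W \<noteq> {}"
    and "\<forall>x. \<exists>s\<in>W. x - s \<in> lat u"
  shows "\<exists>B. is_minimal_complement (B + (*s) (int n) ` lat u) W"
proof -
  let ?G = "outside_periodic_classes u W" and ?K = "(*s) (int n) ` lat u"
  from box_plus_scaled_lat_plus_eq_UNIV[OF assms(1,4)]
  have "?G \<subseteq> fundamental_box u n + ?K + W"
    by simp
  then have "\<exists>B\<subseteq>fundamental_box u n. ?G \<subseteq> B + ?K + W \<and> (\<forall>b\<in>B. \<not> ?G \<subseteq> (B - {b}) + ?K + W)"
    by (rule finite_subset_irredundant[OF finite_fundamental_box])
  then obtain B where B: "B \<subseteq> fundamental_box u n" "?G \<subseteq> B + ?K + W"
      "\<forall>b\<in>B. \<not> ?G \<subseteq> (B - {b}) + ?K + W"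
    by (elim exE conjE) (rule that; assumption)
  have "B \<noteq> {}"
    using B(2) assms(3) by (metis subset_empty sumset_empty(2))
  have "B \<subseteq> lat u"
    using B(1) fundamental_box_subset_cone cone_subset_lat by blast
  have complement: "is_complement (B + ?K) W"
    using \<open>B \<noteq> {}\<close> \<open>B \<subseteq> lat u\<close> zero_in_scaled_lat lat_subset_cone_plus_scaled_lat[OF assms(1)] B(2)
    by (rule is_complement_of_outside_cover)
  have "is_minimal_complement (B + ?K) W"
    by (rule is_minimal_complement_of_irredundant_cover)
      (fact scaled_lat_add scaled_lat_diff scaled_lat_subset_lat \<open>B \<subseteq> lat u\<close> separated B(2)
        B(3)[rule_format] complement)+
  then show ?thesis
    by blast
qed

theorem corollary4p14:
  fixes u :: "'n::finite \<Rightarrow> int ^ 'n" and W :: "(int ^ 'n) set"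
  assumes "Zindep u"
    and "eventually_periodic u W"
    and "scrW1 u W \<noteq> {}"
    and "covers_quotient u (calW u W \<union> scrW1 u W)"
  shows "\<exists>M. is_minimal_complement M W"
proof -
  have "finite (scrW u W)"
    using assms(2) by (simp add: eventually_periodic_def scrW_def)
  then obtain n where "n > 0"
    and "\<forall>x\<in>scrW u W. \<forall>y\<in>scrW u W. x - y \<in> range ((*s) (int n)) \<longrightarrow> x = y"
    using finite_separated_mod_scaling by blast
  then have separated: "w = w'"
    if "w \<in> scrW u W" "w' \<in> scrW u W" "w - w' \<in> (*s) (int n) ` lat u" for w w'
    using that by blast
  have "outside_periodic_classes u W \<noteq> {}"
    using assms(3) scrW1_subset_outside_periodic_classes[OF assms(1,2)] by blast
  moreover have "calW u W \<union> scrW1 u W \<subseteq> W"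
    by (auto simp: calW_def scrW1_def scrW_def)
  then have "\<forall>x. \<exists>s\<in>W. x - s \<in> lat u"
    using assms(4) unfolding covers_quotient_def by blast
  ultimately show ?thesis
    using ex_minimal_complement_plus_scaled_lat[OF \<open>n > 0\<close> separated] by blast
qed

end
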